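(* Let $d_1,\dots,d_r\ge1$, $n_j=d_j+1$, and let $k_1,\dots,k_r$ be nonnegative integers with $\sum_jk_j=\sum_jd_j$. Let $K=\mathbb C(u_1,\dots,u_r)$, $L=K(z_1,\dots,z_r)$ with $z_j^{n_j}=u_j$, and $\mathrm{tr}_{L/K}(g)=\sum g(z_1,\dots,z_r)$ over all solutions of $z_j^{n_j}=u_j$ ($1\le j\le r$). Put $$T_k(u)=\mathrm{tr}_{L/K}\left(\frac1{z_1^{d_1-k_1}\cdots z_r^{d_r-k_r}(1-z_1-\dots-z_r)}\right)\in K.$$ Then $T_k$ is regular at $u=0$ and its power series expansion there is $$T_k(u)=n_1\cdots n_r\sum_{b_1,\dots,b_r\ge0}\frac{(n_1b_1+\dots+n_rb_r)!}{(n_1b_1+d_1-k_1)!\cdots(n_rb_r+d_r-k_r)!}\,u_1^{b_1}\cdots u_r^{b_r},$$ with the convention $1/m!=0$ for negative integers $m$. *)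

theory Defs
  imports "HOL-Analysis.Analysis"
begin

text \<open>Points z = (z_1,...,z_r) are modelled as functions nat => complex vanishing
  outside {0..<r} (index j corresponds to the paper's j+1).\<close>

definition root_tuples :: "nat \<Rightarrow> (nat \<Rightarrow> nat) \<Rightarrow> (nat \<Rightarrow> complex) \<Rightarrow> (nat \<Rightarrow> complex) set" where
  "root_tuples r n u = {z. (\<forall>j<r. z j ^ n j = u j) \<and> (\<forall>j. r \<le> j \<longrightarrow> z j = 0)}"

definition trace_T :: "nat \<Rightarrow> (nat \<Rightarrow> nat) \<Rightarrow> (nat \<Rightarrow> nat) \<Rightarrow> (nat \<Rightarrow> complex) \<Rightarrow> complex" where
  "trace_T r d k u =
     (\<Sum>z\<in>root_tuples r (\<lambda>j. d j + 1) u.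
        1 / ((\<Prod>j<r. z j powi (int (d j) - int (k j))) * (1 - (\<Sum>j<r. z j))))"

definition inv_fact :: "int \<Rightarrow> complex" where
  "inv_fact m = (if m < 0 then 0 else 1 / of_nat (fact (nat m)))"

definition multi_indices :: "nat \<Rightarrow> (nat \<Rightarrow> nat) set" where
  "multi_indices r = {b. \<forall>j. r \<le> j \<longrightarrow> b j = 0}"

end

theory Submission
  imports Defs
begin

text \<open>For small u every root tuple z satisfies |z_1| + ... + |z_r| < 1, so each summand of the
  trace expands as z^(k-d) times the multinomial geometric series
  1 / (1 - z_1 - ... - z_r) = \<Sum>_a (a_1 + ... + a_r)! / (a_1! ... a_r!) z^a.
  Summing over the roots first, \<Sum>_{\<zeta>^n = u} \<zeta>^e vanishes unless n divides e, when it
  equals n u^(e/n). Hence only the exponents a_j = n_j b_j + d_j - k_j survive, and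
  \<Sum> k_j = \<Sum> d_j turns a_1 + ... + a_r into n_1 b_1 + ... + n_r b_r.\<close>

definition multi_indices_of_degree :: "nat \<Rightarrow> nat \<Rightarrow> (nat \<Rightarrow> nat) set" where
  "multi_indices_of_degree r m = {a \<in> multi_indices r. (\<Sum>j<r. a j) = m}"

definition multinomial_coeff :: "nat \<Rightarrow> (nat \<Rightarrow> nat) \<Rightarrow> 'a :: field_char_0" where
  "multinomial_coeff r a = of_nat (fact (\<Sum>j<r. a j)) / of_nat (\<Prod>j<r. fact (a j))"

lemma multi_indices_of_degree_0: "multi_indices_of_degree 0 m = (if m = 0 then {\<lambda>_. 0} else {})"
  by (auto simp: multi_indices_of_degree_def multi_indices_def)

lemma bij_betw_multi_indices_of_degree_Suc:
  "bij_betw (\<lambda>(i, a). a(r := i))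
     (SIGMA i:{..m}. multi_indices_of_degree r (m - i)) (multi_indices_of_degree (Suc r) m)"
proof (rule bij_betw_byWitness[where f' = "\<lambda>b. (b r, b(r := 0))"])
  have "(\<Sum>j<r. (a(r := i)) j) = (\<Sum>j<r. a j)" for a :: "nat \<Rightarrow> nat" and i
    by (intro sum.cong) auto
  then show "(\<lambda>(i, a). a(r := i)) ` (SIGMA i:{..m}. multi_indices_of_degree r (m - i))
      \<subseteq> multi_indices_of_degree (Suc r) m"
    by (auto simp: multi_indices_of_degree_def multi_indices_def)
qed (auto simp: multi_indices_of_degree_def multi_indices_def)

lemma finite_multi_indices_of_degree: "finite (multi_indices_of_degree r m)"
proof (induction r arbitrary: m)
  case 0
  then show ?case by (simp add: multi_indices_of_degree_0)
next
  case (Suc r)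
  then have "finite (SIGMA i:{..m}. multi_indices_of_degree r (m - i))"
    by blast
  then show ?case
    using bij_betw_finite[OF bij_betw_multi_indices_of_degree_Suc] by blast
qed

lemma multinomial_theorem:
  fixes w :: "nat \<Rightarrow> 'a :: field_char_0"
  shows "(\<Sum>j<r. w j) ^ m =
    (\<Sum>a\<in>multi_indices_of_degree r m. multinomial_coeff r a * (\<Prod>j<r. w j ^ a j))"
proof (induction r arbitrary: m)
  case 0
  then show ?case by (simp add: multi_indices_of_degree_0 multinomial_coeff_def)
next
  case (Suc r)
  let ?t = "\<lambda>r a. multinomial_coeff r a * (\<Prod>j<r. w j ^ a j) :: 'a"
  have step: "of_nat (m choose i) * w r ^ i * ?t r a = ?t (Suc r) (a(r := i))"
    if "i \<le> m" "a \<in> multi_indices_of_degree r (m - i)" for i a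
  proof -
    have "a r = 0" "(\<Sum>j<r. a j) = m - i"
      using that by (auto simp: multi_indices_of_degree_def multi_indices_def)
    moreover have "(\<Prod>j<r. f ((a(r := i)) j)) = (\<Prod>j<r. f (a j))" for f :: "nat \<Rightarrow> 'a"
      by (intro prod.cong) auto
    moreover have "(\<Prod>j<r. fact ((a(r := i)) j)) = (\<Prod>j<r. fact (a j) :: nat)"
      by (intro prod.cong) auto
    moreover have "(\<Sum>j<r. (a(r := i)) j) = (\<Sum>j<r. a j)"
      by (intro sum.cong) auto
    moreover have "(of_nat (\<Prod>j<r. fact (a j)) :: 'a) \<noteq> 0"
      by (simp add: prod_pos)
    ultimately show ?thesis
      using that(1) by (simp add: multinomial_coeff_def binomial_fact field_simps)
  qed
  have "(\<Sum>j<Suc r. w j) ^ m = (\<Sum>i\<le>m. of_nat (m choose i) * w r ^ i * (\<Sum>j<r. w j) ^ (m - i))"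
    by (simp add: binomial_ring add.commute)
  also have "\<dots> = (\<Sum>i\<le>m. \<Sum>a\<in>multi_indices_of_degree r (m - i). ?t (Suc r) (a(r := i)))"
    by (intro sum.cong refl) (simp add: Suc.IH sum_distrib_left step)
  also have "\<dots> = (\<Sum>(i, a)\<in>(SIGMA i:{..m}. multi_indices_of_degree r (m - i)). ?t (Suc r) (a(r := i)))"
    by (rule sum.Sigma) (auto simp: finite_multi_indices_of_degree)
  also have "\<dots> = (\<Sum>b\<in>multi_indices_of_degree (Suc r) m. ?t (Suc r) b)"
    by (subst sum.reindex_bij_betw[OF bij_betw_multi_indices_of_degree_Suc, symmetric])
       (simp add: case_prod_unfold)
  finally show ?case .
qed

lemma has_sum_geometric:
  fixes s :: "'a :: {real_normed_field, banach}"
  assumes "norm s < 1"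
  shows "((\<lambda>m. s ^ m) has_sum 1 / (1 - s)) UNIV"
proof (rule norm_summable_imp_has_sum)
  show "summable (\<lambda>m. norm (s ^ m))"
    using assms by (simp add: norm_power summable_geometric)
  show "(\<lambda>m. s ^ m) sums (1 / (1 - s))"
    using geometric_sums[OF assms] by simp
qed

lemma norm_multinomial_coeff [simp]:
  "norm (multinomial_coeff r a :: 'a :: {real_normed_field, field_char_0}) = multinomial_coeff r a"
  unfolding multinomial_coeff_def norm_divide norm_of_nat ..

text \<open>Grouping the terms by total degree m turns the series into the geometric series in
  w_1 + ... + w_r; absolute convergence comes from the same computation for the norms.\<close>

lemma has_sum_multinomial_geometric:
  fixes w :: "nat \<Rightarrow> 'a :: {real_normed_field, banach}"
  assumes w: "(\<Sum>j<r. norm (w j)) < 1"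
  shows "((\<lambda>a. multinomial_coeff r a * (\<Prod>j<r. w j ^ a j)) has_sum 1 / (1 - (\<Sum>j<r. w j)))
           (multi_indices r)"
proof -
  define t where "t = (\<lambda>(m::nat, a). multinomial_coeff r a * (\<Prod>j<r. w j ^ a j))"
  define S where "S = (SIGMA m:UNIV. multi_indices_of_degree r m)"
  have t_degree: "((\<lambda>a. t (m, a)) has_sum (\<Sum>j<r. w j) ^ m) (multi_indices_of_degree r m)" for m
    by (rule has_sum_finiteI[OF finite_multi_indices_of_degree]) (simp add: t_def multinomial_theorem)
  have norm_t_degree: "((\<lambda>a. norm (t (m, a))) has_sum (\<Sum>j<r. norm (w j)) ^ m)
      (multi_indices_of_degree r m)" for m
    by (rule has_sum_finiteI[OF finite_multi_indices_of_degree])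
       (simp add: t_def multinomial_theorem norm_mult prod_norm[symmetric] norm_power)
  have "norm (\<Sum>j<r. norm (w j)) < 1"
    using w by (simp add: sum_nonneg)
  then have "(\<lambda>m. (\<Sum>j<r. norm (w j)) ^ m) summable_on UNIV"
    using has_sum_geometric unfolding summable_on_def by blast
  then have "(\<lambda>x. norm (t x)) summable_on S"
    unfolding S_def by (rule summable_on_SigmaI[where f = "\<lambda>x. norm (t x)", OF norm_t_degree]) auto
  then have "t summable_on S"
    by (rule abs_summable_summable)
  moreover have "norm (\<Sum>j<r. w j) < 1"
    using norm_sum[of w "{..<r}"] w by linarith
  ultimately have "(t has_sum 1 / (1 - (\<Sum>j<r. w j))) S"
    unfolding S_def by (intro has_sum_SigmaI[OF t_degree has_sum_geometric])
  then show ?thesis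
    by (subst (asm) has_sum_reindex_bij_witness[where i = "\<lambda>a. (\<Sum>j<r. a j, a)" and j = snd
          and T = "multi_indices r" and s' = "1 / (1 - (\<Sum>j<r. w j))"])
       (auto simp: S_def multi_indices_of_degree_def t_def)
qed

text \<open>Multiplying by a primitive n-th root of unity \<omega> permutes the n-th roots of u, so the
  sum is invariant under multiplication by \<omega>^m, which is not 1 unless m = 0.\<close>

lemma sum_nth_roots_power:
  fixes u :: complex
  assumes u: "u \<noteq> 0" and n: "0 < n" and m: "m < n"
  shows "(\<Sum>\<zeta> | \<zeta> ^ n = u. \<zeta> ^ m) = (if m = 0 then of_nat n else 0)"
proof (cases "m = 0")
  case True
  then show ?thesis using card_nth_roots[OF u n] by simp
next
  case False
  define \<omega> where "\<omega> = cis (2 * pi / real n)"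
  have \<omega>_pow: "\<omega> ^ i = cis (2 * pi * real i / real n)" for i
    unfolding \<omega>_def Complex.DeMoivre by (simp add: mult_ac)
  have "\<omega> ^ n = 1"
    using n by (simp add: \<omega>_pow)
  have "\<omega> ^ m \<noteq> \<omega> ^ 0"
    using inj_onD[OF bij_betw_imp_inj_on[OF Complex.bij_betw_roots_unity[OF n]], of m 0] False m
    by (auto simp: \<omega>_pow)
  have "(\<Sum>\<zeta> | \<zeta> ^ n = u. \<zeta> ^ m) = (\<Sum>\<zeta> | \<zeta> ^ n = u. (\<omega> * \<zeta>) ^ m)"
    using \<open>\<omega> ^ n = 1\<close>
    by (intro sum.reindex_bij_witness[where i = "\<lambda>\<zeta>. \<omega> * \<zeta>" and j = "\<lambda>\<zeta>. \<zeta> / \<omega>"])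
       (auto simp: \<omega>_def power_mult_distrib power_divide)
  also have "\<dots> = \<omega> ^ m * (\<Sum>\<zeta> | \<zeta> ^ n = u. \<zeta> ^ m)"
    by (simp add: power_mult_distrib sum_distrib_left)
  finally show ?thesis
    using \<open>\<omega> ^ m \<noteq> \<omega> ^ 0\<close> False by (simp add: algebra_simps)
qed

lemma sum_nth_roots_power_int:
  fixes u :: complex
  assumes u: "u \<noteq> 0" and n: "0 < n"
  shows "(\<Sum>\<zeta> | \<zeta> ^ n = u. \<zeta> powi e) = (if int n dvd e then of_nat n * u powi (e div int n) else 0)"
proof -
  define q where "q = e div int n"
  define m where "m = nat (e mod int n)"
  have e: "e = int n * q + int m" and "m < n"
    using n by (simp_all add: q_def m_def nat_less_iff)
  have "\<zeta> powi e = u powi q * \<zeta> ^ m" if "\<zeta> ^ n = u" for \<zeta>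
  proof -
    have "\<zeta> \<noteq> 0"
      using that u n by auto
    then show ?thesis
      unfolding e using that by (simp add: power_int_add power_int_mult)
  qed
  then have "(\<Sum>\<zeta> | \<zeta> ^ n = u. \<zeta> powi e) = u powi q * (\<Sum>\<zeta> | \<zeta> ^ n = u. \<zeta> ^ m)"
    by (simp add: sum_distrib_left)
  also have "\<dots> = u powi q * (if m = 0 then of_nat n else 0)"
    by (simp add: sum_nth_roots_power[OF u n \<open>m < n\<close>])
  also have "m = 0 \<longleftrightarrow> int n dvd e"
    using n pos_mod_sign[of "int n" e] by (auto simp: m_def dvd_eq_mod_eq_0 simp del: pos_mod_sign)
  finally show ?thesis
    by (simp add: q_def mult.commute)
qed

lemma bij_betw_root_tuples_PiE:
  "bij_betw (\<lambda>z. restrict z {..<r}) (root_tuples r n u) (\<Pi>\<^sub>E j\<in>{..<r}. {\<zeta>. \<zeta> ^ n j = u j})"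
  by (rule bij_betw_byWitness[where f' = "\<lambda>z j. if j < r then z j else 0"])
     (auto simp: root_tuples_def PiE_def extensional_def fun_eq_iff)

lemma finite_root_tuples:
  assumes "\<forall>j<r. 0 < n j"
  shows "finite (root_tuples r n u)"
  using bij_betw_finite[OF bij_betw_root_tuples_PiE] assms by (auto intro!: finite_PiE)

lemma sum_prod_root_tuples:
  fixes g :: "nat \<Rightarrow> complex \<Rightarrow> 'a :: comm_semiring_1"
  assumes "\<forall>j<r. 0 < n j"
  shows "(\<Sum>z\<in>root_tuples r n u. \<Prod>j<r. g j (z j)) = (\<Prod>j<r. \<Sum>\<zeta> | \<zeta> ^ n j = u j. g j \<zeta>)"
proof -
  have "(\<Prod>j<r. \<Sum>\<zeta> | \<zeta> ^ n j = u j. g j \<zeta>) = (\<Sum>z\<in>(\<Pi>\<^sub>E j\<in>{..<r}. {\<zeta>. \<zeta> ^ n j = u j}). \<Prod>j<r. g j (z j))"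
    using assms by (intro prod_sum_PiE) auto
  also have "\<dots> = (\<Sum>z\<in>root_tuples r n u. \<Prod>j<r. g j (restrict z {..<r} j))"
    by (rule sum.reindex_bij_betw[OF bij_betw_root_tuples_PiE, symmetric])
  finally show ?thesis
    by simp
qed

lemma norm_root_less:
  fixes \<zeta> :: "'a :: real_normed_div_algebra"
  assumes "\<zeta> ^ n = u" and "norm u < c ^ n" and "0 \<le> c"
  shows "norm \<zeta> < c"
  using assms power_less_imp_less_base by (metis norm_power)

lemma root_tuples_norm_sum_less_1:
  assumes n: "\<forall>j<r. 0 < n j"
  shows "\<exists>\<epsilon>>0. \<forall>u. (\<forall>j<r. norm (u j) < \<epsilon>) \<longrightarrow>
           (\<forall>z\<in>root_tuples r n u. (\<Sum>j<r. norm (z j)) < 1)"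
proof -
  define c :: real where "c = 1 / (r + 1)"
  have c: "0 < c" "c \<le> 1" "real r * c < 1"
    by (simp_all add: c_def field_simps)
  have "(\<Sum>j<r. norm (z j)) < 1"
    if u: "\<forall>j<r. norm (u j) < c ^ (\<Sum>j<r. n j)" and z: "z \<in> root_tuples r n u" for u z
  proof -
    have "norm (z j) < c" if j: "j < r" for j
    proof (rule norm_root_less)
      show "z j ^ n j = u j"
        using z j by (simp add: root_tuples_def)
      have "c ^ (\<Sum>j<r. n j) \<le> c ^ n j"
        using j n c by (intro power_decreasing member_le_sum) auto
      then show "norm (u j) < c ^ n j"
        using u j by (meson less_le_trans)
    qed (use c in simp)
    then have "(\<Sum>j<r. norm (z j)) \<le> real r * c"
      using sum_mono[of "{..<r}" "\<lambda>j. norm (z j)" "\<lambda>_. c"] by fastforce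
    also have "\<dots> < 1"
      by (fact c)
    finally show ?thesis .
  qed
  moreover have "0 < c ^ (\<Sum>j<r. n j)"
    using c by simp
  ultimately show ?thesis
    by blast
qed

lemma has_sum_shifted_multinomial_geometric:
  fixes z :: "nat \<Rightarrow> 'a :: {real_normed_field, banach}" and s :: "nat \<Rightarrow> int"
  assumes nz: "\<forall>j<r. z j \<noteq> 0" and small: "(\<Sum>j<r. norm (z j)) < 1"
  shows "((\<lambda>a. multinomial_coeff r a * (\<Prod>j<r. z j powi (int (a j) - s j)))
           has_sum 1 / ((\<Prod>j<r. z j powi s j) * (1 - (\<Sum>j<r. z j)))) (multi_indices r)"
proof -
  define P where "P = (\<Prod>j<r. z j powi s j)"
  have "(\<Prod>j<r. z j powi (int (a j) - s j)) = (\<Prod>j<r. z j ^ a j) / P" for a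
    using nz by (simp add: P_def power_int_diff prod_dividef)
  then show ?thesis
    using has_sum_cmult_right[OF has_sum_multinomial_geometric[OF small], of "1 / P"]
    by (simp add: P_def field_simps)
qed

lemma has_sum_sum:
  fixes f :: "'i \<Rightarrow> 'a \<Rightarrow> 'b :: topological_comm_monoid_add"
  assumes "finite I" and "\<And>i. i \<in> I \<Longrightarrow> (f i has_sum s i) A"
  shows "((\<lambda>x. \<Sum>i\<in>I. f i x) has_sum (\<Sum>i\<in>I. s i)) A"
  using assms by (induction I rule: finite_induct) (auto intro: has_sum_add)

lemma has_sum_trace_T:
  fixes d k :: "nat \<Rightarrow> nat" and u :: "nat \<Rightarrow> complex"
  defines "s \<equiv> \<lambda>j. int (d j) - int (k j)"
  assumes u: "\<forall>j<r. u j \<noteq> 0"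
    and small: "\<forall>z\<in>root_tuples r (\<lambda>j. d j + 1) u. (\<Sum>j<r. norm (z j)) < 1"
  shows "((\<lambda>a. multinomial_coeff r a *
            (\<Prod>j<r. if int (d j + 1) dvd int (a j) - s j
                     then of_nat (d j + 1) * u j powi ((int (a j) - s j) div int (d j + 1)) else 0))
          has_sum trace_T r d k u) (multi_indices r)"
proof -
  define R where "R = root_tuples r (\<lambda>j. d j + 1) u"
  have "finite R"
    unfolding R_def by (simp add: finite_root_tuples)
  have "((\<lambda>a. multinomial_coeff r a * (\<Prod>j<r. z j powi (int (a j) - s j)))
          has_sum 1 / ((\<Prod>j<r. z j powi s j) * (1 - (\<Sum>j<r. z j)))) (multi_indices r)"
    if "z \<in> R" for z
  proof (rule has_sum_shifted_multinomial_geometric)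
    show "\<forall>j<r. z j \<noteq> 0"
      using that u by (auto simp: R_def root_tuples_def)
  qed (use that small in \<open>simp add: R_def\<close>)
  then have "((\<lambda>a. \<Sum>z\<in>R. multinomial_coeff r a * (\<Prod>j<r. z j powi (int (a j) - s j)))
          has_sum trace_T r d k u) (multi_indices r)"
    unfolding trace_T_def s_def R_def[symmetric] by (rule has_sum_sum[OF \<open>finite R\<close>])
  moreover have "(\<Sum>z\<in>R. \<Prod>j<r. z j powi (int (a j) - s j)) =
      (\<Prod>j<r. if int (d j + 1) dvd int (a j) - s j
               then of_nat (d j + 1) * u j powi ((int (a j) - s j) div int (d j + 1)) else 0)" for a
  proof -
    have "(\<Sum>z\<in>R. \<Prod>j<r. z j powi (int (a j) - s j)) =
        (\<Prod>j<r. \<Sum>\<zeta> | \<zeta> ^ (d j + 1) = u j. \<zeta> powi (int (a j) - s j))"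
      unfolding R_def by (rule sum_prod_root_tuples) simp
    also have "\<dots> = (\<Prod>j<r. if int (d j + 1) dvd int (a j) - s j
               then of_nat (d j + 1) * u j powi ((int (a j) - s j) div int (d j + 1)) else 0)"
      using u by (intro prod.cong refl sum_nth_roots_power_int) auto
    finally show ?thesis .
  qed
  ultimately show ?thesis
    by (simp add: sum_distrib_left[symmetric])
qed

lemma dvd_imp_div_nonneg:
  fixes x :: int
  assumes "int n dvd x" and "- int n < x"
  shows "0 \<le> x div int n"
proof -
  obtain q where q: "x = int n * q"
    using assms(1) by blast
  then have "n > 0"
    using assms(2) by (cases "n = 0") auto
  have "int n * - 1 < int n * q"
    using assms(2) q by simp
  then have "- 1 < q"
    using \<open>n > 0\<close> by (simp only: mult_less_cancel_left_pos of_nat_0_less_iff)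
  then show ?thesis
    using q \<open>n > 0\<close> by simp
qed

text \<open>The bound s_j < n_j is what makes the quotients b_j = (a_j - s_j) / n_j nonnegative.\<close>

lemma has_sum_reindex_residues:
  fixes n :: "nat \<Rightarrow> nat" and s :: "nat \<Rightarrow> int"
  assumes s: "\<forall>j<r. s j < int (n j)"
  shows "(f has_sum S) {a \<in> multi_indices r. \<forall>j<r. int (n j) dvd int (a j) - s j} \<longleftrightarrow>
         ((\<lambda>b. f (\<lambda>j. if j < r then nat (int (n j * b j) + s j) else 0)) has_sum S)
           {b \<in> multi_indices r. \<forall>j<r. 0 \<le> int (n j * b j) + s j}"
proof -
  define A where "A = {a \<in> multi_indices r. \<forall>j<r. int (n j) dvd int (a j) - s j}"
  define B where "B = {b \<in> multi_indices r. \<forall>j<r. 0 \<le> int (n j * b j) + s j}"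
  define \<alpha> where "\<alpha> = (\<lambda>b j. if j < r then nat (int (n j * b j) + s j) else 0)"
  define \<beta> where "\<beta> = (\<lambda>a j. if j < r then nat ((int (a j) - s j) div int (n j)) else 0)"
  have "\<beta> (\<alpha> b) = b \<and> \<alpha> b \<in> A" if b: "b \<in> B" for b
  proof -
    have "int (\<alpha> b j) - s j = int (n j) * int (b j)" if "j < r" for j
      using b that by (simp add: B_def \<alpha>_def)
    moreover have "n j > 0" if "j < r" for j
    proof -
      have "0 \<le> int (n j * b j) + s j" "s j < int (n j)"
        using b that s by (auto simp: B_def)
      then show ?thesis
        by (cases "n j = 0") auto
    qed
    ultimately show ?thesis
      using b by (auto simp: A_def B_def \<alpha>_def \<beta>_def multi_indices_def fun_eq_iff)
  qed
  moreover have "\<alpha> (\<beta> a) = a \<and> \<beta> a \<in> B" if a: "a \<in> A" for a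
  proof -
    have "0 \<le> (int (a j) - s j) div int (n j)"
      and "int (n j) * ((int (a j) - s j) div int (n j)) = int (a j) - s j" if "j < r" for j
      using a that s by (auto simp: A_def intro!: dvd_imp_div_nonneg dvd_mult_div_cancel)
    then show ?thesis
      using a by (auto simp: A_def B_def \<alpha>_def \<beta>_def multi_indices_def fun_eq_iff)
  qed
  ultimately have "((\<lambda>b. f (\<alpha> b)) has_sum S) B \<longleftrightarrow> (f has_sum S) A"
    by (intro has_sum_reindex_bij_witness[of B \<beta> \<alpha> A]) auto
  then show ?thesis
    unfolding A_def B_def \<alpha>_def by (rule sym)
qed

lemma root_filtered_term_eq:
  fixes n a b :: "nat \<Rightarrow> nat" and s :: "nat \<Rightarrow> int" and u :: "nat \<Rightarrow> complex"
  assumes n: "\<forall>j<r. 0 < n j" and s: "(\<Sum>j<r. s j) = 0"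
    and a: "\<forall>j<r. int (a j) = int (n j * b j) + s j"
  shows "multinomial_coeff r a *
           (\<Prod>j<r. if int (n j) dvd int (a j) - s j
                    then of_nat (n j) * u j powi ((int (a j) - s j) div int (n j)) else 0) =
         (\<Prod>j<r. of_nat (n j)) *
           (of_nat (fact (\<Sum>j<r. n j * b j)) * (\<Prod>j<r. inv_fact (int (n j * b j) + s j))) *
           (\<Prod>j<r. u j ^ b j)"
proof -
  have "int (\<Sum>j<r. a j) = (\<Sum>j<r. int (n j * b j)) + (\<Sum>j<r. s j)"
    using a by (simp add: sum.distrib)
  then have "int (\<Sum>j<r. a j) = int (\<Sum>j<r. n j * b j)"
    using s by (simp add: of_nat_sum)
  then have "(\<Sum>j<r. a j) = (\<Sum>j<r. n j * b j)"
    by (simp only: of_nat_eq_iff)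
  moreover have "(\<Prod>j<r. inv_fact (int (n j * b j) + s j)) = (\<Prod>j<r. inv_fact (int (a j)))"
    using a by (intro prod.cong refl) simp
  moreover have "\<dots> = 1 / of_nat (\<Prod>j<r. fact (a j))"
    by (simp add: inv_fact_def prod_dividef)
  ultimately have "multinomial_coeff r a =
      of_nat (fact (\<Sum>j<r. n j * b j)) * (\<Prod>j<r. inv_fact (int (n j * b j) + s j))"
    by (simp add: multinomial_coeff_def)
  moreover have "(\<Prod>j<r. if int (n j) dvd int (a j) - s j
        then of_nat (n j) * u j powi ((int (a j) - s j) div int (n j)) else 0) =
      (\<Prod>j<r. of_nat (n j)) * (\<Prod>j<r. u j ^ b j)"
    unfolding prod.distrib[symmetric] using n a by (intro prod.cong refl) simp
  ultimately show ?thesis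
    by (simp add: algebra_simps)
qed

lemma has_sum_trace_T_power_series:
  fixes d k :: "nat \<Rightarrow> nat" and u :: "nat \<Rightarrow> complex"
  assumes k_sum: "(\<Sum>j<r. k j) = (\<Sum>j<r. d j)"
    and u: "\<forall>j<r. u j \<noteq> 0"
    and small: "\<forall>z\<in>root_tuples r (\<lambda>j. d j + 1) u. (\<Sum>j<r. norm (z j)) < 1"
  shows "((\<lambda>b. (\<Prod>j<r. of_nat (d j + 1)) *
                (of_nat (fact (\<Sum>j<r. (d j + 1) * b j)) *
                 (\<Prod>j<r. inv_fact (int ((d j + 1) * b j) + int (d j) - int (k j)))) *
                (\<Prod>j<r. u j ^ b j))
          has_sum trace_T r d k u) (multi_indices r)" (is "(?G has_sum _) _")
proof -
  define n where "n = (\<lambda>j. d j + 1)"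
  define s where "s = (\<lambda>j. int (d j) - int (k j))"
  have n_pos: "0 < n j" for j
    by (simp add: n_def)
  define F where "F = (\<lambda>a. multinomial_coeff r a *
    (\<Prod>j<r. if int (n j) dvd int (a j) - s j
             then of_nat (n j) * u j powi ((int (a j) - s j) div int (n j)) else (0 :: complex)))"
  define A where "A = {a \<in> multi_indices r. \<forall>j<r. int (n j) dvd int (a j) - s j}"
  define B where "B = {b \<in> multi_indices r. \<forall>j<r. 0 \<le> int (n j * b j) + s j}"
  define \<alpha> where "\<alpha> = (\<lambda>b j. if j < r then nat (int (n j * b j) + s j) else 0)"
  have "(F has_sum trace_T r d k u) (multi_indices r)"
    unfolding F_def n_def s_def using has_sum_trace_T[OF u small] by simp
  then have "(F has_sum trace_T r d k u) A"
    by (rule has_sum_cong_neutral[THEN iffD1, rotated -1]) (auto simp: A_def F_def)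
  then have "((\<lambda>b. F (\<alpha> b)) has_sum trace_T r d k u) B"
    unfolding A_def B_def \<alpha>_def by (subst (asm) has_sum_reindex_residues) (auto simp: n_def s_def)
  moreover have "F (\<alpha> b) = ?G b" if "b \<in> B" for b
  proof -
    have "\<forall>j<r. int (\<alpha> b j) = int (n j * b j) + s j"
      using that by (simp add: B_def \<alpha>_def)
    moreover have "(\<Sum>j<r. s j) = 0"
      using k_sum by (simp add: s_def sum_subtractf flip: of_nat_sum)
    ultimately show ?thesis
      unfolding F_def using n_pos by (subst root_filtered_term_eq) (auto simp: n_def s_def add_diff_eq)
  qed
  ultimately have "(?G has_sum trace_T r d k u) B"
    using has_sum_cong by (metis (no_types, lifting))
  moreover have "?G b = 0" if b: "b \<in> multi_indices r - B" for b
  proof -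
    obtain j where "j < r" and "int ((d j + 1) * b j) + int (d j) - int (k j) < 0"
      using b by (auto simp: B_def n_def s_def not_le)
    then have "(\<Prod>j<r. inv_fact (int ((d j + 1) * b j) + int (d j) - int (k j))) = 0"
      by (auto simp: inv_fact_def prod_zero_iff intro!: bexI[of _ j])
    then show ?thesis
      by simp
  qed
  ultimately show ?thesis
    by (rule has_sum_cong_neutral[THEN iffD1, rotated -1]) (auto simp: B_def)
qed

theorem mainTheorem12:
  fixes r :: nat and d k :: "nat \<Rightarrow> nat"
  assumes d_pos: "\<forall>j<r. 1 \<le> d j"
    and k_sum: "(\<Sum>j<r. k j) = (\<Sum>j<r. d j)"
  shows "\<exists>\<epsilon>>0. \<forall>u :: nat \<Rightarrow> complex.
           (\<forall>j<r. u j \<noteq> 0 \<and> norm (u j) < \<epsilon>) \<longrightarrow>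
           ((\<lambda>b. (\<Prod>j<r. of_nat (d j + 1)) *
                  (of_nat (fact (\<Sum>j<r. (d j + 1) * b j)) *
                   (\<Prod>j<r. inv_fact (int ((d j + 1) * b j) + int (d j) - int (k j)))) *
                  (\<Prod>j<r. u j ^ b j))
            has_sum trace_T r d k u) (multi_indices r)"
proof -
  obtain \<epsilon> :: real where "\<epsilon> > 0" and small: "\<forall>u. (\<forall>j<r. norm (u j) < \<epsilon>) \<longrightarrow>
      (\<forall>z\<in>root_tuples r (\<lambda>j. d j + 1) u. (\<Sum>j<r. norm (z j)) < 1)"
    using root_tuples_norm_sum_less_1[of r "\<lambda>j. d j + 1"] by auto
  then show ?thesis
    using small by (intro exI[of _ \<epsilon>] conjI allI impI has_sum_trace_T_power_series[OF k_sum]) auto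
qed

end
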